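(* Let $\mu_0$ be the probability measure whose moments are $\binom{3n}{n}\frac{1}{n+1}$, $n\ge0$. Then, on a neighbourhood of $0$, its $S$-transform and $R$-transform are \[ S_{\mu_0}(z)=\frac{4(1+z)}{8z^2+12z+3+\sqrt{9+8z}},\qquad R_{\mu_0}(z)=\frac{4z-1+\sqrt{1-2z}}{2(1-2z)}, \] where the square roots are the principal branches, equal to $3$ and $1$ at $z=0$ respectively.
   Context: For a compactly supported probability measure $\mu$ on $[0,\infty)$, let $M_\mu(z)=\sum_{m\ge0}z^m\int t^m\,d\mu(t)$. The $R$-transform $R_\mu$ is defined near $0$ by $R_\mu(zM_\mu(z))+1=M_\mu(z)$. The $S$-transform $S_\mu$ is defined near $0$ by $M_\mu\!\left(\frac{z}{1+z}S_\mu(z)\right)=1+z$, equivalently $R_\mu(zS_\mu(z))=z$. *)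

theory Defs
  imports "HOL-Probability.Probability"
begin

definition moment_series :: "real measure \<Rightarrow> complex \<Rightarrow> complex" where
  "moment_series \<mu> z = (\<Sum>m. z ^ m * complex_of_real (\<integral>t. t ^ m \<partial>\<mu>))"

definition is_R_transform :: "real measure \<Rightarrow> (complex \<Rightarrow> complex) \<Rightarrow> bool" where
  "is_R_transform \<mu> R \<longleftrightarrow>
     (\<exists>r>0. R holomorphic_on ball 0 r) \<and>
     (\<forall>\<^sub>F z in nhds 0. R (z * moment_series \<mu> z) + 1 = moment_series \<mu> z)"

definition is_S_transform :: "real measure \<Rightarrow> (complex \<Rightarrow> complex) \<Rightarrow> bool" where
  "is_S_transform \<mu> S \<longleftrightarrow>
     (\<exists>r>0. S holomorphic_on ball 0 r) \<and>
     (\<forall>\<^sub>F z in nhds 0. moment_series \<mu> (z / (1 + z) * S z) = 1 + z)"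

end

theory Submission
  imports Defs
begin

(* The moment series M of mu0 is the branch through (0, 1) of the cubic
     2 x (1 - 2 z x)^2 - 2 + 4 z x + z = 0.
   On the formal level this is seen through the substitution z = V (1 - V)^2: the series
   (1/2) ((1 - V)^-1 + (1 - V)^-2) satisfies a second-order Euler-type differential equation
   whose coefficients are exactly the two-term recurrence
   2 (2n + 1) (n + 2) m(n+1) = 3 (3n + 1) (3n + 2) m(n) of the moments, hence it is M,
   and it satisfies the cubic identically.
   Both transforms are then read off from the cubic. Putting x = 1 + z makes it a quadratic
   in w = z S(z) / (1 + z), whose root near 0 gives S; putting u = z x makes it the quadratic
   (2 x (1 - 2u) - 1)^2 = 1 - 2u in x, whose root near 1 is R(u) + 1. Uniqueness of both
   transforms comes from the implicit function theorem at (0, 1), where the partial derivatives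
   of the cubic in x and in w are 2 and -3. *)

section \<open>The moments of mu0 and their generating series\<close>

definition mu0_moment :: "nat \<Rightarrow> real" where
  "mu0_moment n = real ((3 * n) choose n) / real (n + 1)"

lemma binomial_triple_Suc:
  "real ((3 * n + 3) choose (n + 1)) * (2 * (real n + 1) * (2 * real n + 1))
     = 3 * (3 * real n + 2) * (3 * real n + 1) * real ((3 * n) choose n)"
proof -
  have f3: "fact (3 * n + 3) = (3 * real n + 3) * (3 * real n + 2) * (3 * real n + 1) * fact (3 * n)"
    by (simp add: numeral_3_eq_3 algebra_simps)
  have f2: "fact (2 * n + 2) = (2 * real n + 2) * (2 * real n + 1) * fact (2 * n)"
    by (simp add: numeral_2_eq_2 algebra_simps)
  have f1: "fact (n + 1) = (real n + 1) * fact n"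
    by simp
  have b1: "real ((3 * n + 3) choose (n + 1)) * (fact (n + 1) * fact (2 * n + 2)) = fact (3 * n + 3)"
    and b0: "real ((3 * n) choose n) * (fact n * fact (2 * n)) = fact (3 * n)"
    by (simp_all add: binomial_fact)
  have "real ((3 * n + 3) choose (n + 1)) * (2 * (real n + 1) * (2 * real n + 1))
          * ((real n + 1) * fact n * fact (2 * n))
      = 3 * (3 * real n + 2) * (3 * real n + 1) * real ((3 * n) choose n)
          * ((real n + 1) * fact n * fact (2 * n))"
    using b1 b0 f1 f2 f3 by algebra
  then show ?thesis
    by (simp add: add_nonneg_pos)
qed

lemma mu0_moment_Suc:
  "2 * (2 * real n + 1) * (real n + 2) * mu0_moment (Suc n)
     = 3 * (3 * real n + 1) * (3 * real n + 2) * mu0_moment n"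
proof -
  have "2 * (2 * real n + 1) * (real n + 2) * mu0_moment (Suc n)
      = 2 * (2 * real n + 1) * real ((3 * n + 3) choose (n + 1))"
    by (simp add: mu0_moment_def field_simps add_pos_nonneg)
  also have "\<dots> = 3 * (3 * real n + 1) * (3 * real n + 2) * real ((3 * n) choose n) / (real n + 1)"
    using binomial_triple_Suc[of n] by (simp add: field_simps add_nonneg_pos)
  also have "\<dots> = 3 * (3 * real n + 1) * (3 * real n + 2) * mu0_moment n"
    by (simp add: mu0_moment_def)
  finally show ?thesis .
qed

lemma mu0_moment_nonneg: "mu0_moment n \<ge> 0"
  by (simp add: mu0_moment_def)

lemma mu0_moment_le: "mu0_moment n \<le> 8 ^ n"
proof -
  have "mu0_moment n \<le> real ((3 * n) choose n)"
    by (simp add: mu0_moment_def divide_le_eq)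
  also have "\<dots> \<le> 2 ^ (3 * n)"
    using binomial_le_pow2[of "3 * n" n] by (metis of_nat_le_iff of_nat_numeral of_nat_power)
  also have "(2::real) ^ (3 * n) = 8 ^ n"
    by (simp add: power_mult)
  finally show ?thesis .
qed

definition fps_euler :: "'a::comm_ring_1 fps \<Rightarrow> 'a fps" where
  "fps_euler F = fps_X * fps_deriv F"

lemma fps_euler_nth [simp]: "fps_nth (fps_euler F) n = of_nat n * fps_nth F n"
  by (cases n) (simp_all add: fps_euler_def)

definition mu0_fps :: "complex fps" where
  "mu0_fps = Abs_fps (\<lambda>n. of_real (mu0_moment n))"

lemma ode_solution_eq_mu0_fps:
  fixes C :: "complex fps"
  assumes C0: "fps_nth C 0 = 1"
    and ode: "2 * (2 * fps_euler (fps_euler C) + fps_euler C - C) + 2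
              = 3 * fps_X * (9 * fps_euler (fps_euler C) + 9 * fps_euler C + 2 * C)"
  shows "C = mu0_fps"
proof (rule fps_ext)
  fix n show "fps_nth C n = fps_nth mu0_fps n"
  proof (induction n)
    case 0
    then show ?case
      using C0 by (simp add: mu0_fps_def mu0_moment_def)
  next
    case (Suc n)
    have nonzero: "complex_of_real (2 * (2 * real n + 1) * (real n + 2)) \<noteq> 0"
      by (simp only: of_real_eq_0_iff) (auto simp: add_pos_nonneg)
    have "2 * (2 * fps_euler (fps_euler C) + fps_euler C - C) + 2
        = fps_X * (3 * (9 * fps_euler (fps_euler C) + 9 * fps_euler C + 2 * C))"
      using ode by (simp add: ac_simps)
    from arg_cong[OF this, of "\<lambda>F. fps_nth F (Suc n)"]
    have "of_real (2 * (2 * real n + 1) * (real n + 2)) * fps_nth C (Suc n)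
        = of_real (3 * (3 * real n + 1) * (3 * real n + 2)) * fps_nth C n"
      by (simp only: fps_X_mult_nth) (simp add: numeral_fps_const algebra_simps)
    also have "\<dots> = of_real (2 * (2 * real n + 1) * (real n + 2)) * of_real (mu0_moment (Suc n))"
      unfolding of_real_mult[symmetric] mu0_moment_Suc Suc.IH by (simp add: mu0_fps_def)
    finally show ?case
      unfolding mult_left_cancel[OF nonzero] by (simp add: mu0_fps_def)
  qed
qed

lemma ex_compositional_inverse_X_one_minus_X_squared:
  "\<exists>V :: 'a::field fps. fps_nth V 0 = 0 \<and> V * (1 - V)^2 = fps_X"
proof -
  define g :: "'a fps" where "g = fps_X * (1 - fps_X)^2"
  define V where "V = fps_inv g"
  have g0: "fps_nth g 0 = 0" and g1: "fps_nth g 1 = 1"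
    by (simp_all add: g_def power2_eq_square fps_mult_nth numeral_2_eq_2)
  have V0: "fps_nth V 0 = 0"
    by (simp add: V_def fps_inv_def)
  have "V * (1 - V)^2 = g oo V"
    using V0 by (simp add: g_def fps_compose_mult_distrib fps_compose_sub_distrib
        fps_compose_power[symmetric])
  also have "\<dots> = fps_X"
    unfolding V_def using g0 g1 by (intro fps_inv_right) auto
  finally show ?thesis
    using V0 by blast
qed

lemma mu0_ode_parametrized_solution:
  fixes V :: "'a::field_char_0 fps"
  assumes V0: "fps_nth V 0 = 0" and VX: "V * (1 - V)^2 = fps_X"
  defines "C \<equiv> fps_const (1/2) * (inverse (1 - V) + inverse (1 - V)^2)"
  shows "2 * (2 * fps_euler (fps_euler C) + fps_euler C - C) + 2
       = 3 * fps_X * (9 * fps_euler (fps_euler C) + 9 * fps_euler C + 2 * C)"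
proof -
  \<comment> \<open>As dX/dV = (1 - V) (1 - 3 V), all derivatives are polynomials in V, P and Q.\<close>
  define P where "P = inverse (1 - V)"
  define Q where "Q = inverse (1 - 3 * V)"
  define h where "h = (fps_const (1/2) :: 'a fps)"
  have h2: "h * 2 = 1"
    by (simp add: h_def numeral_fps_const flip: fps_const_mult)
  have P: "(1 - V) * P = 1" and Q: "(1 - 3 * V) * Q = 1"
    unfolding P_def Q_def using V0 by (simp_all add: inverse_mult_eq_1')
  have "fps_deriv (V * (1 - V)^2) = 1"
    unfolding VX by simp
  then have "fps_deriv V * (1 - V) * (1 - 3 * V) = 1"
    by (simp add: fps_deriv_power power2_eq_square algebra_simps)
  then have dV: "fps_deriv V = P * Q"
    using P Q by algebra
  have "fps_deriv ((1 - V) * P) = 0" and "fps_deriv ((1 - 3 * V) * Q) = 0"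
    unfolding P Q by simp_all
  then have dP: "fps_deriv P = P^3 * Q" and dQ: "fps_deriv Q = 3 * P * Q^3"
    using P Q dV by (simp_all add: algebra_simps) algebra+
  have hd: "fps_deriv h = 0"
    by (simp add: h_def)
  have C: "C = h * (P + P^2)"
    unfolding C_def h_def P_def ..
  have T1: "fps_euler C = h * (V * P * Q + 2 * V * P^2 * Q)"
    unfolding fps_euler_def C using P VX h2 dP
    by (simp add: hd power2_eq_square algebra_simps) algebra
  have dT1: "fps_deriv (fps_euler C) = h * (fps_deriv V * P * Q + V * fps_deriv P * Q + V * P * fps_deriv Q
      + 2 * (fps_deriv V * P^2 * Q + V * (2 * P * fps_deriv P) * Q + V * P^2 * fps_deriv Q))"
    unfolding T1 by (simp add: hd power2_eq_square algebra_simps)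
  show ?thesis
    unfolding fps_euler_def[of "fps_euler C"] dT1 unfolding T1 unfolding C dP dQ dV VX[symmetric]
    using P Q h2 by algebra
qed

lemma mu0_fps_cubic:
  "2 * mu0_fps * (1 - 2 * fps_X * mu0_fps)^2 - 2 + 4 * fps_X * mu0_fps + fps_X = 0"
proof -
  obtain V :: "complex fps" where V0: "fps_nth V 0 = 0" and VX: "V * (1 - V)^2 = fps_X"
    using ex_compositional_inverse_X_one_minus_X_squared by blast
  define P where "P = inverse (1 - V)"
  define h where "h = (fps_const (1/2) :: complex fps)"
  define C where "C = h * (P + P^2)"
  have "fps_nth C 0 = 1"
    using V0 by (simp add: C_def P_def h_def power2_eq_square)
  then have C: "C = mu0_fps"
    using mu0_ode_parametrized_solution[OF V0 VX] by (intro ode_solution_eq_mu0_fps) (simp_all add: C_def P_def h_def)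
  have "(1 - V) * P = 1"
    unfolding P_def using V0 by (simp add: inverse_mult_eq_1')
  moreover have "h * 2 = 1"
    by (simp add: h_def numeral_fps_const flip: fps_const_mult)
  ultimately show ?thesis
    using C_def unfolding C[symmetric] VX[symmetric] by algebra
qed

lemma mu0_fps_conv_radius_pos: "fps_conv_radius mu0_fps > 0"
proof -
  have "norm (fps_nth mu0_fps n * (1/16 :: complex) ^ n) \<le> (1/2) ^ n" for n
  proof -
    have "norm (fps_nth mu0_fps n * (1/16 :: complex) ^ n) = mu0_moment n / 16 ^ n"
      by (simp add: mu0_fps_def norm_mult norm_power norm_divide power_one_over mu0_moment_nonneg)
    also have "\<dots> \<le> 8 ^ n / 16 ^ n"
      by (intro divide_right_mono mu0_moment_le) simp
    also have "\<dots> = (1/2) ^ n"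
      by (simp add: power_divide[symmetric])
    finally show ?thesis .
  qed
  then have "summable (\<lambda>n. fps_nth mu0_fps n * (1/16 :: complex) ^ n)"
    by (intro summable_comparison_test[OF _ summable_geometric[of "1/2"]]) auto
  then have "fps_conv_radius mu0_fps \<ge> ereal (1/16)"
    unfolding fps_conv_radius_def using conv_radius_geI by fastforce
  then show ?thesis
    by (rule order.strict_trans2[rotated]) simp
qed

section \<open>The cubic equation and its branch through (0, 1)\<close>

lemma holomorphic_on_ball_imp_isCont:
  assumes "f holomorphic_on ball a r" and "r > 0"
  shows "isCont f a"
  using holomorphic_on_imp_continuous_on[OF assms(1)] assms(2)
  by (simp add: continuous_on_eq_continuous_at)

lemma isCont_imp_tendsto_nhds: "isCont f a \<Longrightarrow> (f \<longlongrightarrow> f a) (nhds a)"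
  by (simp add: isCont_def tendsto_at_iff_tendsto_nhds)

lemma isCont_eventually_at_imp_eventually_nhds:
  fixes f g :: "'a::{perfect_space,t2_space} \<Rightarrow> 'b::t2_space"
  assumes "isCont f a" "isCont g a" and "\<forall>\<^sub>F x in at a. f x = g x"
  shows "\<forall>\<^sub>F x in nhds a. f x = g x"
proof -
  have "g \<midarrow>a\<rightarrow> f a"
    using assms(1) tendsto_cong[OF assms(3)] by (simp add: isCont_def)
  then have "f a = g a"
    using assms(2) by (simp add: isCont_def LIM_unique)
  with assms(3) show ?thesis
    by (simp add: eventually_nhds_conv_at)
qed

lemma tendsto_one_plus_nhds_0: "((\<lambda>z. 1 + z) \<longlongrightarrow> 1) (nhds (0 :: 'a::real_normed_algebra_1))"
  using tendsto_add[OF tendsto_const[of 1] filterlim_ident[of "nhds 0"]] by simp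

lemma eventually_norm_less_nhds_0:
  "r > 0 \<Longrightarrow> \<forall>\<^sub>F z in nhds 0. norm (z :: 'a::real_normed_vector) < r"
  by (auto simp: eventually_nhds_metric dist_norm)

definition mu0_cubic :: "complex \<Rightarrow> complex \<Rightarrow> complex" where
  "mu0_cubic w x = 2 * x * (1 - 2 * w * x)^2 - 2 + 4 * w * x + w"

lemma mu0_cubic_eventually_unique_x:
  assumes "(w \<longlongrightarrow> 0) F" "(x \<longlongrightarrow> 1) F" "(y \<longlongrightarrow> 1) F"
    and "\<forall>\<^sub>F z in F. mu0_cubic (w z) (x z) = 0" "\<forall>\<^sub>F z in F. mu0_cubic (w z) (y z) = 0"
  shows "\<forall>\<^sub>F z in F. x z = y z"
proof -
  \<comment> \<open>the divided difference of the cubic in x, tending to its x-derivative 2 at (0, 1)\<close>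
  define G where "G z = 2 - 8 * w z * (x z + y z) + 8 * (w z)^2 * ((x z)^2 + x z * y z + (y z)^2) + 4 * w z" for z
  have "(G \<longlongrightarrow> 2 - 8 * 0 * (1 + 1) + 8 * 0^2 * (1^2 + 1 * 1 + 1^2) + 4 * 0) F"
    unfolding G_def by (intro tendsto_intros assms)
  then have "(G \<longlongrightarrow> 2) F"
    by simp
  then have "\<forall>\<^sub>F z in F. G z \<noteq> 0"
    by (rule tendsto_imp_eventually_ne) simp
  with assms(4,5) show ?thesis
  proof eventually_elim
    case (elim z)
    have "mu0_cubic (w z) (x z) - mu0_cubic (w z) (y z) = (x z - y z) * G z"
      unfolding mu0_cubic_def G_def by algebra
    with elim show ?case
      by simp
  qed
qed

lemma mu0_cubic_eventually_unique_w:
  assumes "(v \<longlongrightarrow> 0) F" "(w \<longlongrightarrow> 0) F" "(x \<longlongrightarrow> 1) F"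
    and "\<forall>\<^sub>F z in F. mu0_cubic (v z) (x z) = 0" "\<forall>\<^sub>F z in F. mu0_cubic (w z) (x z) = 0"
  shows "\<forall>\<^sub>F z in F. v z = w z"
proof -
  define G where "G z = 8 * (x z)^3 * (v z + w z) - 8 * (x z)^2 + 4 * x z + 1" for z
  have "(G \<longlongrightarrow> 8 * 1^3 * (0 + 0) - 8 * 1^2 + 4 * 1 + 1) F"
    unfolding G_def by (intro tendsto_intros assms)
  then have "(G \<longlongrightarrow> -3) F"
    by simp
  then have "\<forall>\<^sub>F z in F. G z \<noteq> 0"
    by (rule tendsto_imp_eventually_ne) simp
  with assms(4,5) show ?thesis
  proof eventually_elim
    case (elim z)
    have "mu0_cubic (v z) (x z) - mu0_cubic (w z) (x z) = (v z - w z) * G z"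
      unfolding mu0_cubic_def G_def by algebra
    with elim show ?case
      by simp
  qed
qed

lemma mu0_cubic_sqrt_form:
  "(2 * x * (1 - 2 * (w * x)) - 1)^2 - (1 - 2 * (w * x)) = 2 * x * mu0_cubic w x"
  unfolding mu0_cubic_def by algebra

section \<open>The S- and R-transforms\<close>

definition S_mu0 :: "complex \<Rightarrow> complex" where
  "S_mu0 z = 4 * (1 + z) / (8 * z\<^sup>2 + 12 * z + 3 + csqrt (9 + 8 * z))"

definition R_mu0 :: "complex \<Rightarrow> complex" where
  "R_mu0 z = (4 * z - 1 + csqrt (1 - 2 * z)) / (2 * (1 - 2 * z))"

lemma Re_S_mu0_denominator_pos:
  fixes z :: complex
  assumes "norm z < 1/10"
  shows "Re (8 * z\<^sup>2 + 12 * z + 3 + csqrt (9 + 8 * z)) > 0"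
proof -
  have "norm (8 * z\<^sup>2 + 12 * z) \<le> 8 * norm z ^ 2 + 12 * norm z"
    using norm_triangle_ineq[of "8 * z\<^sup>2" "12 * z"] by (simp add: norm_mult norm_power)
  also have "\<dots> \<le> 8 * (1/10)^2 + 12 * (1/10)"
    using assms by (intro add_mono mult_left_mono power_mono) auto
  also have "\<dots> < 3"
    by (simp add: power2_eq_square)
  finally have "Re (8 * z\<^sup>2 + 12 * z) > -3"
    using abs_Re_le_cmod[of "8 * z\<^sup>2 + 12 * z"] by linarith
  moreover have "Re (csqrt (9 + 8 * z)) \<ge> 0"
    by (rule Re_csqrt)
  ultimately show ?thesis
    by (simp only: plus_complex.sel complex_Re_numeral)
qed

lemma S_mu0_denominator_nonzero:
  fixes z :: complex
  assumes "norm z < 1/10"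
  shows "8 * z\<^sup>2 + 12 * z + 3 + csqrt (9 + 8 * z) \<noteq> 0"
  using Re_S_mu0_denominator_pos[OF assms] by (metis less_irrefl zero_complex.sel(1))

lemma holomorphic_S_mu0: "S_mu0 holomorphic_on ball 0 (1/10)"
  unfolding S_mu0_def
proof (intro holomorphic_intros)
  fix z :: complex
  assume "z \<in> ball 0 (1/10)"
  then have z: "norm z < 1/10"
    by simp
  then have "Re (9 + 8 * z) > 0"
    using abs_Re_le_cmod[of z] by simp
  then show "9 + 8 * z \<notin> \<real>\<^sub>\<le>\<^sub>0"
    by (auto simp: complex_nonpos_Reals_iff)
  show "8 * z\<^sup>2 + 12 * z + 3 + csqrt (9 + 8 * z) \<noteq> 0"
    using S_mu0_denominator_nonzero[OF z] .
qed

lemma isCont_S_mu0: "isCont S_mu0 0"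
  by (rule holomorphic_on_ball_imp_isCont[OF holomorphic_S_mu0]) simp

lemma mu0_cubic_S_mu0:
  fixes z :: complex
  assumes "norm z < 1/10"
  shows "mu0_cubic (z / (1 + z) * S_mu0 z) (1 + z) = 0"
proof -
  define q where "q = csqrt (9 + 8 * z)"
  define d where "d = 8 * z\<^sup>2 + 12 * z + 3 + q"
  define w where "w = z / (1 + z) * S_mu0 z"
  have "d \<noteq> 0"
    using S_mu0_denominator_nonzero[OF assms] by (simp add: d_def q_def)
  have "1 + z \<noteq> 0"
    using assms by (auto simp: add_eq_0_iff)
  moreover have "d * S_mu0 z = 4 * (1 + z)"
    using \<open>d \<noteq> 0\<close> by (simp add: S_mu0_def d_def q_def)
  ultimately have wd: "w * d = 4 * z"
    unfolding w_def by (metis mult.assoc mult.commute nonzero_mult_div_cancel_left times_divide_eq_left)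
  have "q^2 = 9 + 8 * z"
    by (simp add: q_def)
  then have "d^2 * mu0_cubic w (1 + z) = 0"
    using wd unfolding mu0_cubic_def d_def by algebra
  with \<open>d \<noteq> 0\<close> show ?thesis
    by (simp add: w_def)
qed

lemma tendsto_S_argument:
  assumes "isCont S 0"
  shows "((\<lambda>z. z / (1 + z) * S z) \<longlongrightarrow> 0) (nhds (0 :: complex))"
proof -
  have "isCont (\<lambda>z. z / (1 + z) * S z) 0"
    using assms by (intro continuous_intros) simp_all
  then show ?thesis
    using isCont_imp_tendsto_nhds by fastforce
qed

lemma holomorphic_R_mu0: "R_mu0 holomorphic_on ball 0 (1/4)"
  unfolding R_mu0_def
proof (intro holomorphic_intros)
  fix z :: complex
  assume "z \<in> ball 0 (1/4)"
  then have "Re (1 - 2 * z) > 0"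
    using abs_Re_le_cmod[of z] by simp
  then show "1 - 2 * z \<notin> \<real>\<^sub>\<le>\<^sub>0" and "2 * (1 - 2 * z) \<noteq> 0"
    by (auto simp: complex_nonpos_Reals_iff complex_eq_iff)
qed

lemma R_mu0_plus_one_eq_iff:
  assumes "1 - 2 * u \<noteq> 0"
  shows "R_mu0 u + 1 = x \<longleftrightarrow> csqrt (1 - 2 * u) = 2 * x * (1 - 2 * u) - 1"
  using assms unfolding R_mu0_def by (auto simp: field_simps)

locale mu0_branch =
  fixes M :: "complex \<Rightarrow> complex"
  assumes isCont_M: "isCont M 0"
    and M_0: "M 0 = 1"
    and mu0_cubic_M: "\<forall>\<^sub>F z in nhds 0. mu0_cubic z (M z) = 0"
begin

lemma tendsto_M_comp:
  assumes "(w \<longlongrightarrow> 0) F"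
  shows "((\<lambda>z. M (w z)) \<longlongrightarrow> 1) F"
  using isCont_tendsto_compose[OF isCont_M assms] by (simp add: M_0)

lemma eventually_M_comp_eq_iff:
  assumes "(w \<longlongrightarrow> 0) F" and "(x \<longlongrightarrow> 1) F"
  shows "(\<forall>\<^sub>F z in F. M (w z) = x z) \<longleftrightarrow> (\<forall>\<^sub>F z in F. mu0_cubic (w z) (x z) = 0)"
proof
  assume "\<forall>\<^sub>F z in F. M (w z) = x z"
  with eventually_compose_filterlim[OF mu0_cubic_M assms(1)]
  show "\<forall>\<^sub>F z in F. mu0_cubic (w z) (x z) = 0"
    by eventually_elim simp
next
  assume "\<forall>\<^sub>F z in F. mu0_cubic (w z) (x z) = 0"
  with assms tendsto_M_comp[OF assms(1)] eventually_compose_filterlim[OF mu0_cubic_M assms(1)]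
  show "\<forall>\<^sub>F z in F. M (w z) = x z"
    using mu0_cubic_eventually_unique_x by blast
qed

lemma S_equation_iff_cubic:
  assumes "isCont S 0"
  shows "(\<forall>\<^sub>F z in nhds 0. M (z / (1 + z) * S z) = 1 + z)
     \<longleftrightarrow> (\<forall>\<^sub>F z in nhds 0. mu0_cubic (z / (1 + z) * S z) (1 + z) = 0)"
  by (rule eventually_M_comp_eq_iff[OF tendsto_S_argument[OF assms]])
    (rule tendsto_one_plus_nhds_0)

lemma S_equation_S_mu0: "\<forall>\<^sub>F z in nhds 0. M (z / (1 + z) * S_mu0 z) = 1 + z"
proof -
  have "\<forall>\<^sub>F z in nhds 0. norm z < (1/10 :: real)"
    by (rule eventually_norm_less_nhds_0) simp
  then show ?thesis
    unfolding S_equation_iff_cubic[OF isCont_S_mu0] by (rule eventually_mono) (rule mu0_cubic_S_mu0)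
qed

lemma S_equation_unique:
  assumes "isCont S 0" and "\<forall>\<^sub>F z in nhds 0. M (z / (1 + z) * S z) = 1 + z"
  shows "\<forall>\<^sub>F z in nhds 0. S z = S_mu0 z"
proof (rule isCont_eventually_at_imp_eventually_nhds[OF assms(1) isCont_S_mu0])
  have "\<forall>\<^sub>F z in nhds 0. z / (1 + z) * S z = z / (1 + z) * S_mu0 z"
    using tendsto_S_argument[OF assms(1)] tendsto_S_argument[OF isCont_S_mu0]
      _ assms(2)[unfolded S_equation_iff_cubic[OF assms(1)]]
      S_equation_S_mu0[unfolded S_equation_iff_cubic[OF isCont_S_mu0]]
    by (rule mu0_cubic_eventually_unique_w) (rule tendsto_one_plus_nhds_0)
  then have "\<forall>\<^sub>F z in at 0. z / (1 + z) * S z = z / (1 + z) * S_mu0 z"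
    by (simp add: eventually_nhds_conv_at)
  moreover have "\<forall>\<^sub>F z in at 0. z \<noteq> 0 \<and> 1 + z \<noteq> (0 :: complex)"
    by (auto simp: eventually_at dist_norm add_eq_0_iff intro!: exI[of _ 1])
  ultimately show "\<forall>\<^sub>F z in at 0. S z = S_mu0 z"
    by eventually_elim simp
qed

lemma R_equation_R_mu0: "\<forall>\<^sub>F z in nhds 0. R_mu0 (z * M z) + 1 = M z"
proof -
  \<comment> \<open>s z squares to 1 - 2 z M(z) and has positive real part near 0, so it is the principal root.\<close>
  define s where "s z = 2 * M z * (1 - 2 * (z * M z)) - 1" for z
  have M: "(M \<longlongrightarrow> 1) (nhds 0)"
    using tendsto_M_comp[OF filterlim_ident] .
  have "(s \<longlongrightarrow> 2 * 1 * (1 - 2 * (0 * 1)) - 1) (nhds 0)"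
    unfolding s_def by (intro tendsto_intros M filterlim_ident)
  then have "((\<lambda>z. Re (s z)) \<longlongrightarrow> 1) (nhds 0)"
    using tendsto_Re by fastforce
  then have "\<forall>\<^sub>F z in nhds 0. Re (s z) > 0"
    by (rule order_tendstoD) simp
  moreover have "((\<lambda>z. 1 - 2 * (z * M z)) \<longlongrightarrow> 1 - 2 * (0 * 1)) (nhds 0)"
    by (intro tendsto_intros M filterlim_ident)
  then have "\<forall>\<^sub>F z in nhds 0. 1 - 2 * (z * M z) \<noteq> 0"
    by (rule tendsto_imp_eventually_ne) simp
  ultimately show ?thesis
    using mu0_cubic_M
  proof eventually_elim
    case (elim z)
    have "(s z)^2 = 1 - 2 * (z * M z)"
      using mu0_cubic_sqrt_form[of "M z" z] elim(3) by (simp add: s_def)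
    then have "csqrt (1 - 2 * (z * M z)) = s z"
      using elim(1) by (intro csqrt_unique) auto
    with elim(2) show ?case
      by (simp add: R_mu0_plus_one_eq_iff s_def)
  qed
qed

lemma R_equation_unique:
  assumes "\<forall>\<^sub>F z in nhds 0. R (z * M z) + 1 = M z"
  shows "\<forall>\<^sub>F u in nhds 0. R u = R_mu0 u"
proof -
  \<comment> \<open>Parametrize the branch by u = w x: then x = R_mu0 u + 1 and w = u / x solve the cubic.\<close>
  define x where "x u = R_mu0 u + 1" for u
  define w where "w u = u / x u" for u
  have "isCont R_mu0 0"
    by (rule holomorphic_on_ball_imp_isCont[OF holomorphic_R_mu0]) simp
  then have "(R_mu0 \<longlongrightarrow> R_mu0 0) (nhds 0)"
    by (rule isCont_imp_tendsto_nhds)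
  then have x: "(x \<longlongrightarrow> 1) (nhds 0)"
    unfolding x_def using tendsto_add_const_iff[of 1 R_mu0 0] by (simp add: R_mu0_def add.commute)
  have w: "(w \<longlongrightarrow> 0) (nhds 0)"
    using tendsto_divide[OF filterlim_ident x] by (simp add: w_def[abs_def])
  have "\<forall>\<^sub>F u in nhds 0. x u \<noteq> 0"
    using x by (rule tendsto_imp_eventually_ne) simp
  moreover have "((\<lambda>u::complex. 1 - 2 * u) \<longlongrightarrow> 1 - 2 * 0) (nhds 0)"
    by (intro tendsto_intros filterlim_ident)
  then have "\<forall>\<^sub>F u in nhds 0. 1 - 2 * u \<noteq> (0 :: complex)"
    by (rule tendsto_imp_eventually_ne) simp
  ultimately have xw: "\<forall>\<^sub>F u in nhds 0. w u * x u = u \<and> mu0_cubic (w u) (x u) = 0"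
  proof eventually_elim
    case (elim u)
    then have wx: "w u * x u = u"
      by (simp add: w_def)
    have "csqrt (1 - 2 * u) = 2 * x u * (1 - 2 * u) - 1"
      using R_mu0_plus_one_eq_iff[OF elim(2), of "x u"] by (simp add: x_def)
    then have "(2 * x u * (1 - 2 * u) - 1)^2 = 1 - 2 * u"
      by (metis power2_csqrt)
    then have "2 * x u * mu0_cubic (w u) (x u) = 0"
      using mu0_cubic_sqrt_form[of "x u" "w u"] by (simp add: wx)
    with elim(1) wx show ?case
      by simp
  qed
  then have "\<forall>\<^sub>F u in nhds 0. M (w u) = x u"
    by (simp add: eventually_M_comp_eq_iff[OF w x] eventually_conj_iff)
  with xw eventually_compose_filterlim[OF assms w] show ?thesis
    by eventually_elim (simp add: x_def)
qed

end

lemma moment_series_eq_eval_mu0_fps: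
  assumes "\<And>n::nat. (\<integral>t. t ^ n \<partial>\<mu>) = real ((3 * n) choose n) / real (n + 1)"
  shows "moment_series \<mu> = eval_fps mu0_fps"
  by (rule ext) (simp add: moment_series_def eval_fps_def mu0_fps_def mu0_moment_def assms mult.commute)

lemma mu0_branch_eval_mu0_fps: "mu0_branch (eval_fps mu0_fps)"
proof
  show "isCont (eval_fps mu0_fps) 0"
    using mu0_fps_conv_radius_pos by (intro continuous_eval_fps) (simp add: zero_ereal_def)
  show "eval_fps mu0_fps 0 = 1"
    by (simp add: eval_fps_at_0 mu0_fps_def mu0_moment_def)
  have "(\<lambda>z. mu0_cubic z (eval_fps mu0_fps z)) has_fps_expansion
      2 * mu0_fps * (1 - 2 * fps_X * mu0_fps)^2 - 2 + 4 * fps_X * mu0_fps + fps_X"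
    unfolding mu0_cubic_def power2_eq_square
    by (intro fps_expansion_intros eval_fps_has_fps_expansion mu0_fps_conv_radius_pos)
  then show "\<forall>\<^sub>F z in nhds 0. mu0_cubic z (eval_fps mu0_fps z) = 0"
    unfolding mu0_fps_cubic has_fps_expansion_def by (auto elim: eventually_mono)
qed

theorem mainTheorem7:
  fixes \<mu> :: "real measure"
  assumes "prob_space \<mu>"
    and "sets \<mu> = sets borel"
    and "\<exists>K. AE t in \<mu>. 0 \<le> t \<and> t \<le> K"
    and "\<And>n::nat. (\<integral>t. t ^ n \<partial>\<mu>) = real ((3 * n) choose n) / real (n + 1)"
  defines "Sf \<equiv> (\<lambda>z::complex. 4 * (1 + z) / (8 * z\<^sup>2 + 12 * z + 3 + csqrt (9 + 8 * z)))"
    and "Rf \<equiv> (\<lambda>z::complex. (4 * z - 1 + csqrt (1 - 2 * z)) / (2 * (1 - 2 * z)))"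
  shows "is_S_transform \<mu> Sf \<and> is_R_transform \<mu> Rf
     \<and> (\<forall>S. is_S_transform \<mu> S \<longrightarrow> (\<forall>\<^sub>F z in nhds 0. S z = Sf z))
     \<and> (\<forall>R. is_R_transform \<mu> R \<longrightarrow> (\<forall>\<^sub>F z in nhds 0. R z = Rf z))"
proof -
  \<comment> \<open>Only the moments of mu enter.\<close>
  have M: "moment_series \<mu> = eval_fps mu0_fps"
    using assms(4) by (rule moment_series_eq_eval_mu0_fps)
  interpret mu0_branch "moment_series \<mu>"
    unfolding M by (rule mu0_branch_eval_mu0_fps)
  have Sf: "Sf = S_mu0" and Rf: "Rf = R_mu0"
    by (simp_all add: Sf_def Rf_def S_mu0_def R_mu0_def fun_eq_iff)
  have "is_S_transform \<mu> S_mu0" and "is_R_transform \<mu> R_mu0"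
    unfolding is_S_transform_def is_R_transform_def
    using holomorphic_S_mu0 holomorphic_R_mu0 S_equation_S_mu0 R_equation_R_mu0
    by (auto intro: exI[of _ "1/10"] exI[of _ "1/4"])
  moreover have "\<forall>\<^sub>F z in nhds 0. S z = S_mu0 z" if "is_S_transform \<mu> S" for S
    using that unfolding is_S_transform_def
    by (auto intro: S_equation_unique holomorphic_on_ball_imp_isCont)
  moreover have "\<forall>\<^sub>F z in nhds 0. R z = R_mu0 z" if "is_R_transform \<mu> R" for R
    using that unfolding is_R_transform_def by (auto intro: R_equation_unique)
  ultimately show ?thesis
    unfolding Sf Rf by blast
qed

end
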